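(* Let $\alpha>0$ and let $\Phi:[0,\tfrac14]\to[0,\infty)$ be a bounded measurable function, continuous at $\tfrac14$, with $\Phi(\tfrac14)\neq0$; if $\alpha=1$ assume moreover that $\Phi$ is $\beta$-Hölder on $[0,\tfrac14]$ for some $\beta>0$. Then the function $$f(\lambda_1,\lambda_2)=\frac{\sigma_\varepsilon^2}{4\pi^2}\int_0^{1/4}\frac{\Phi(x)\,(\tfrac14-x)^{\alpha}}{\bigl(1-2x(\cos\lambda_1+\cos\lambda_2)\bigr)^2}\,dx$$ (with $\sigma_\varepsilon^2>0$) is integrable on $[-\pi,\pi]^2$. Equivalently, if $\theta$ is a random variable with probability density $\Phi(x)(\tfrac14-x)^\alpha$ on $[0,\tfrac14]$, then $$E\int_{[-\pi,\pi]^2}\bigl|1-\theta(e^{i\lambda_1}+e^{-i\lambda_1}+e^{i\lambda_2}+e^{-i\lambda_2})\bigr|^{-2}\,d\lambda_1\,d\lambda_2<\infty .$$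
   Context: $\Phi$ is $\beta$-Hölder means $|\Phi(x)-\Phi(y)|\le C|x-y|^\beta$ for some $C>0$ and all $x,y\in[0,\tfrac14]$. *)

theory Defs
  imports "HOL-Analysis.Analysis"
begin

definition spec_density :: "real \<Rightarrow> real \<Rightarrow> (real \<Rightarrow> real) \<Rightarrow> real \<times> real \<Rightarrow> real" where
  "spec_density sigma2 alpha Phi l =
     sigma2 / (4 * pi\<^sup>2) *
     (LINT x:{0..1/4}|lborel.
        Phi x * (1/4 - x) powr alpha / (1 - 2 * x * (cos (fst l) + cos (snd l)))\<^sup>2)"

definition holder_on :: "real set \<Rightarrow> real \<Rightarrow> (real \<Rightarrow> real) \<Rightarrow> bool" where
  "holder_on S beta Phi \<longleftrightarrow>
     (\<exists>C>0. \<forall>x\<in>S. \<forall>y\<in>S. \<bar>Phi x - Phi y\<bar> \<le> C * \<bar>x - y\<bar> powr beta)"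

end

theory Submission
  imports Defs
begin

text \<open>
  Write t = 1/4 - x and D = 1 - 2x(cos l1 + cos l2) for the denominator.  Using
  1 - cos l >= l^2/20 on [-pi,pi] one gets  t + l1^2 + l2^2 <= 180 D,  and a crude
  weighted AM-GM inequality with weights 1 - p/2, p/4, p/4 turns this into
  t^(1-p/2) |l1|^(p/2) |l2|^(p/2) <= 180 D.  Hence the integrand of the density is
  dominated by  const * t^(alpha-2+p) * |l1|^(-p) * |l2|^(-p),  a product of three
  one-variable functions.  With p = 1 - min(alpha,1)/2 both exponents are integrable
  (p < 1 and alpha - 2 + p > -1), so Tonelli's theorem makes the kernel integrable
  on the triple product, and Fubini transfers integrability to the density.
\<close>

(* Three successive Taylor bounds for sin and cos on [0,oo), each obtained by
   integrating the previous one (monotonicity via the derivative). *)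
lemma one_minus_cos_le:
  fixes x :: real assumes "x \<ge> 0" shows "1 - cos x \<le> x\<^sup>2/2"
proof -
  let ?f = "\<lambda>x. x\<^sup>2/2 - (1 - cos x)"
  have "\<And>u. \<lbrakk>0 \<le> u; u \<le> x\<rbrakk> \<Longrightarrow> (?f has_real_derivative u - sin u) (at u)"
    by (auto intro!: derivative_eq_intros simp: field_simps power2_eq_square)
  moreover have "\<And>u::real. 0 \<le> u \<Longrightarrow> u - sin u \<ge> 0" using sin_x_le_x by auto
  ultimately have "?f x \<ge> ?f 0"
    by (intro DERIV_nonneg_imp_nondecreasing [OF assms]) (metis)
  then show ?thesis by simp
qed

lemma sin_ge_cubic:
  fixes x :: real assumes "x \<ge> 0" shows "x - x^3/6 \<le> sin x"
proof -
  let ?f = "\<lambda>x. sin x - x + x^3/6"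
  have "\<And>u. \<lbrakk>0 \<le> u; u \<le> x\<rbrakk> \<Longrightarrow> (?f has_real_derivative cos u - 1 + u\<^sup>2/2) (at u)"
    by (auto intro!: derivative_eq_intros simp: field_simps power2_eq_square)
  moreover have "\<And>u::real. 0 \<le> u \<Longrightarrow> cos u - 1 + u\<^sup>2/2 \<ge> 0" using one_minus_cos_le by fastforce
  ultimately have "?f x \<ge> ?f 0"
    by (intro DERIV_nonneg_imp_nondecreasing [OF assms]) auto
  then show ?thesis by simp
qed

lemma cos_le_quartic:
  fixes x :: real assumes "x \<ge> 0" shows "cos x \<le> 1 - x\<^sup>2/2 + x^4/24"
proof -
  let ?f = "\<lambda>x. 1 - x\<^sup>2/2 + x^4/24 - cos x"
  have "\<And>u. \<lbrakk>0 \<le> u; u \<le> x\<rbrakk> \<Longrightarrow> (?f has_real_derivative sin u - u + u^3/6) (at u)"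
    by (auto intro!: derivative_eq_intros simp: field_simps power2_eq_square)
  moreover have "\<And>u::real. 0 \<le> u \<Longrightarrow> sin u - u + u^3/6 \<ge> 0" using sin_ge_cubic by fastforce
  ultimately have "?f x \<ge> ?f 0"
    by (intro DERIV_nonneg_imp_nondecreasing [OF assms]) auto
  then show ?thesis by simp
qed

(* Quadratic lower bound for 1 - cos on a full period: the quartic Taylor bound
   suffices because x^2 <= pi^2 < 10.8. *)
lemma one_minus_cos_ge:
  fixes x :: real assumes "\<bar>x\<bar> \<le> pi" shows "x\<^sup>2/20 \<le> 1 - cos x"
proof -
  have c: "cos x \<le> 1 - x\<^sup>2/2 + x^4/24"
    using cos_le_quartic[of "\<bar>x\<bar>"] by (simp add: power2_abs power_abs)
  have "x\<^sup>2 \<le> pi\<^sup>2" using assms by (metis abs_ge_zero power2_abs power_mono)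
  also have "pi\<^sup>2 \<le> 3.2\<^sup>2" using pi_less_4 pi_approx by (intro power_mono) auto
  finally have "x\<^sup>2 \<le> 10.24" by (simp add: power2_eq_square)
  then have "x\<^sup>2 * (9/20 - x\<^sup>2/24) \<ge> 0" by simp
  then show ?thesis using c by (simp add: algebra_simps power4_eq_xxxx power2_eq_square)
qed

(* The denominator 1 - 2x(cos a + cos b) = 4t + 2x((1 - cos a) + (1 - cos b)),
   t = 1/4 - x, is comparable from below to t + a^2 + b^2; split at x = 1/8. *)
lemma denominator_lower_bound:
  fixes x a b :: real
  assumes "0 \<le> x" "x \<le> 1/4" "\<bar>a\<bar> \<le> pi" "\<bar>b\<bar> \<le> pi"
  shows "(1/4 - x) + a\<^sup>2 + b\<^sup>2 \<le> 180 * (1 - 2 * x * (cos a + cos b))"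
proof -
  define s where "s = (1 - cos a) + (1 - cos b)"
  have s: "0 \<le> s" "s \<le> 4"
    unfolding s_def using cos_le_one[of a] cos_le_one[of b]
      cos_ge_minus_one[of a] cos_ge_minus_one[of b] by linarith+
  have D: "1 - 2 * x * (cos a + cos b) = 4 * (1/4 - x) + 2 * x * s"
    unfolding s_def by (simp add: algebra_simps)
  have "(4 * (1/4 - x) + s) / 9 \<le> 4 * (1/4 - x) + 2 * x * s"
  proof (cases "x \<ge> 1/8")
    case True
    then have "2 * (1/8) * s \<le> 2 * x * s" using s by (intro mult_right_mono) auto
    then show ?thesis using assms s by (simp add: field_simps)
  next
    case False
    moreover have "0 \<le> 2 * x * s" using assms s by simp
    ultimately show ?thesis using s by (simp add: field_simps)
  qed
  moreover have "(a\<^sup>2 + b\<^sup>2) / 20 \<le> s"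
    unfolding add_divide_distrib s_def
    using one_minus_cos_ge[OF assms(3)] one_minus_cos_ge[OF assms(4)] by linarith
  ultimately show ?thesis using D assms(2) by (simp add: field_simps)
qed

lemma powr_weighted_le_sum:
  fixes X Y Z a b c :: real
  assumes "X \<ge> 0" "Y \<ge> 0" "Z \<ge> 0" "a \<ge> 0" "b \<ge> 0" "c \<ge> 0" "a + b + c = 1"
  shows "X powr a * Y powr b * Z powr c \<le> X + Y + Z"
proof -
  let ?S = "X + Y + Z"
  have "X powr a * Y powr b * Z powr c \<le> ?S powr a * ?S powr b * ?S powr c"
    using assms by (intro mult_mono powr_mono2) auto
  also have "\<dots> = ?S" using assms by (simp add: powr_add[symmetric])
  finally show ?thesis .
qed

lemma denominator_power_bound:
  fixes x a b p :: real
  assumes "0 \<le> x" "x \<le> 1/4" "\<bar>a\<bar> \<le> pi" "\<bar>b\<bar> \<le> pi" "0 \<le> p" "p \<le> 2"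
  shows "(1/4 - x) powr (1 - p/2) * \<bar>a\<bar> powr (p/2) * \<bar>b\<bar> powr (p/2)
           \<le> 180 * (1 - 2 * x * (cos a + cos b))"
proof -
  have sq: "\<bar>y\<bar> powr (p/2) = (y\<^sup>2) powr (p/4)" for y :: real
  proof -
    have "(y\<^sup>2) powr (p/4) = (\<bar>y\<bar> powr 2) powr (p/4)" by (simp add: powr_numeral)
    also have "\<dots> = \<bar>y\<bar> powr (p/2)" by (simp only: powr_powr) simp
    finally show ?thesis by simp
  qed
  have "(1/4 - x) powr (1 - p/2) * (a\<^sup>2) powr (p/4) * (b\<^sup>2) powr (p/4) \<le> (1/4 - x) + a\<^sup>2 + b\<^sup>2"
    using assms by (intro powr_weighted_le_sum) auto
  then show ?thesis
    unfolding sq using denominator_lower_bound[OF assms(1-4)] by linarith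
qed

lemma integrand_bound:
  fixes x a b p alpha phi M :: real
  assumes x: "0 \<le> x" "x < 1/4" and ab: "\<bar>a\<bar> \<le> pi" "\<bar>b\<bar> \<le> pi" "a \<noteq> 0" "b \<noteq> 0"
    and p: "0 \<le> p" "p \<le> 2" and phi: "0 \<le> phi" "phi \<le> M"
  shows "phi * (1/4 - x) powr alpha / (1 - 2 * x * (cos a + cos b))\<^sup>2
           \<le> 180\<^sup>2 * M * ((1/4 - x) powr (alpha - 2 + p) * \<bar>a\<bar> powr (-p) * \<bar>b\<bar> powr (-p))"
proof -
  define t where "t = 1/4 - x"
  define D where "D = 1 - 2 * x * (cos a + cos b)"
  define P where "P = t powr (1 - p/2) * \<bar>a\<bar> powr (p/2) * \<bar>b\<bar> powr (p/2)"
  have t: "t > 0" using x by (simp add: t_def)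
  have P: "0 < P" "P \<le> 180 * D"
    using t ab denominator_power_bound[OF x(1) _ ab(1,2) p] x
    by (simp_all add: P_def t_def D_def)
  have sq: "(y powr e)\<^sup>2 = y powr (2 * e)" if "y \<ge> 0" for y e :: real
    using that by (simp add: power2_eq_square powr_add[symmetric])
  have P2: "P\<^sup>2 = t powr (2 - p) * \<bar>a\<bar> powr p * \<bar>b\<bar> powr p"
    unfolding P_def power_mult_distrib using t by (simp add: sq algebra_simps)
  have "P\<^sup>2 \<le> (180 * D)\<^sup>2" using P by (intro power_mono) auto
  then have PD: "P\<^sup>2 / 180\<^sup>2 \<le> D\<^sup>2" by (simp add: power_mult_distrib field_simps)
  have "phi * t powr alpha / D\<^sup>2 \<le> M * t powr alpha / (P\<^sup>2 / 180\<^sup>2)"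
    using phi P PD by (intro frac_le mult_right_mono) auto
  also have "\<dots> = 180\<^sup>2 * M * (t powr alpha / t powr (2 - p) * \<bar>a\<bar> powr (-p) * \<bar>b\<bar> powr (-p))"
    by (simp add: P2 powr_minus field_simps)
  also have "t powr alpha / t powr (2 - p) = t powr (alpha - 2 + p)"
    by (simp add: powr_diff[symmetric] algebra_simps)
  finally show ?thesis unfolding t_def D_def .
qed

lemma nn_integral_powr_from_0_finite:
  fixes q c :: real assumes "q > -1" "c \<ge> 0"
  shows "(\<integral>\<^sup>+ y. ennreal (indicator {0..c} y * y powr q) \<partial>lborel) < \<infinity>"
proof -
  have "((\<lambda>y. y powr q) has_integral (c powr (q+1) / (q+1))) {0..c}"
    using assms by (rule has_integral_powr_from_0)
  then have "((\<lambda>y. if y \<in> {0..c} then y powr q else 0) has_integral (c powr (q+1) / (q+1))) UNIV"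
    by (subst has_integral_restrict_UNIV)
  moreover have "(\<lambda>y. if y \<in> {0..c} then y powr q else 0) = (\<lambda>y. indicator {0..c} y * y powr q)"
    by (auto simp: indicator_def)
  ultimately have "((\<lambda>y. indicator {0..c} y * y powr q) has_integral (c powr (q+1) / (q+1))) UNIV"
    by simp
  then have "integral\<^sup>N lborel (\<lambda>y. indicator {0..c} y * y powr q) = c powr (q+1) / (q+1)"
    by (intro nn_integral_has_integral_lborel) auto
  then show ?thesis by simp
qed

lemma nn_integral_powr_to_endpoint_finite:
  fixes q c :: real assumes "q > -1" "c \<ge> 0"
  shows "(\<integral>\<^sup>+ x. ennreal (indicator {0..c} x * (c - x) powr q) \<partial>lborel) < \<infinity>"
proof -
  define f where "f = (\<lambda>x::real. ennreal (indicator {0..c} x * (c - x) powr q))"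
  have [measurable]: "f \<in> borel_measurable borel" unfolding f_def by measurable
  have "integral\<^sup>N lborel f = (\<integral>\<^sup>+ x. f (c + -1 * x) \<partial>lborel)"
    using nn_integral_real_affine[of f "-1" c] by simp
  also have "(\<lambda>x. f (c + -1 * x)) = (\<lambda>x. ennreal (indicator {0..c} x * x powr q))"
    by (rule ext) (auto simp: f_def indicator_def)
  finally show ?thesis using nn_integral_powr_from_0_finite[OF assms] unfolding f_def by simp
qed

lemma nn_integral_abs_powr_finite:
  fixes p r :: real assumes "p < 1" "r \<ge> 0"
  shows "(\<integral>\<^sup>+ l. ennreal (indicator {-r..r} l * \<bar>l\<bar> powr (-p)) \<partial>lborel) < \<infinity>"
proof -
  define g where "g = (\<lambda>y::real. ennreal (indicator {0..r} y * y powr (-p)))"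
  have [measurable]: "g \<in> borel_measurable borel" unfolding g_def by measurable
  have "(\<integral>\<^sup>+ l. ennreal (indicator {-r..r} l * \<bar>l\<bar> powr (-p)) \<partial>lborel)
      \<le> (\<integral>\<^sup>+ l. g l + g (0 + -1 * l) \<partial>lborel)"
    by (intro nn_integral_mono) (auto simp: g_def indicator_def)
  also have "\<dots> = (\<integral>\<^sup>+ l. g l \<partial>lborel) + (\<integral>\<^sup>+ l. g (0 + -1 * l) \<partial>lborel)"
    by (intro nn_integral_add) auto
  also have "(\<integral>\<^sup>+ l. g (0 + -1 * l) \<partial>lborel) = (\<integral>\<^sup>+ l. g l \<partial>lborel)"
    using nn_integral_real_affine[of g "-1" 0] by simp
  finally have "(\<integral>\<^sup>+ l. ennreal (indicator {-r..r} l * \<bar>l\<bar> powr (-p)) \<partial>lborel)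
      \<le> (\<integral>\<^sup>+ l. g l \<partial>lborel) + (\<integral>\<^sup>+ l. g l \<partial>lborel)" .
  moreover have "(\<integral>\<^sup>+ l. g l \<partial>lborel) < \<infinity>"
    unfolding g_def using assms by (intro nn_integral_powr_from_0_finite) auto
  ultimately show ?thesis by (simp add: ennreal_add_less_top le_less_trans)
qed

lemma integrable_dominated_by_product:
  fixes H :: "(real \<times> real) \<times> real \<Rightarrow> real" and u v h :: "real \<Rightarrow> real" and C :: real
  assumes [measurable]: "H \<in> borel_measurable (lborel \<Otimes>\<^sub>M lborel)"
    and [measurable]: "u \<in> borel_measurable borel" "v \<in> borel_measurable borel" "h \<in> borel_measurable borel"
    and nonneg: "0 \<le> C" "\<And>y. 0 \<le> u y" "\<And>y. 0 \<le> v y" "\<And>y. 0 \<le> h y"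
    and finite: "(\<integral>\<^sup>+ y. u y \<partial>lborel) < \<infinity>" "(\<integral>\<^sup>+ y. v y \<partial>lborel) < \<infinity>"
      "(\<integral>\<^sup>+ y. h y \<partial>lborel) < \<infinity>"
    and bound: "AE a in lborel. AE b in lborel. \<forall>x. \<bar>H ((a, b), x)\<bar> \<le> C * u a * v b * h x"
  shows "integrable (lborel \<Otimes>\<^sub>M lborel) H"
proof -
  define F where "F = (\<lambda>l. \<integral>\<^sup>+ x. ennreal (norm (H (l, x))) \<partial>lborel)"
  have [measurable]: "F \<in> borel_measurable (lborel \<Otimes>\<^sub>M lborel)"
    unfolding F_def lborel_prod by (rule lborel.borel_measurable_nn_integral_fst) measurable
  have F_bound: "F (a, b) \<le> ennreal C * ennreal (u a) * ennreal (v b) * (\<integral>\<^sup>+ x. h x \<partial>lborel)"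
    if "\<forall>x. \<bar>H ((a, b), x)\<bar> \<le> C * u a * v b * h x" for a b
  proof -
    have "F (a, b) \<le> (\<integral>\<^sup>+ x. ennreal (C * u a * v b) * ennreal (h x) \<partial>lborel)"
      unfolding F_def using that nonneg
      by (intro nn_integral_mono) (simp add: ennreal_mult[symmetric] ennreal_leI)
    then show ?thesis using nonneg by (simp add: nn_integral_cmult ennreal_mult)
  qed
  have "(\<integral>\<^sup>+ z. ennreal (norm (H z)) \<partial>(lborel \<Otimes>\<^sub>M lborel)) = (\<integral>\<^sup>+ l. F l \<partial>lborel)"
    unfolding F_def by (rule lborel.nn_integral_fst[symmetric]) measurable
  also have "\<dots> = (\<integral>\<^sup>+ l. F l \<partial>(lborel \<Otimes>\<^sub>M lborel))" by (simp add: lborel_prod)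
  also have "\<dots> = (\<integral>\<^sup>+ a. \<integral>\<^sup>+ b. F (a, b) \<partial>lborel \<partial>lborel)"
    by (rule lborel.nn_integral_fst[symmetric]) measurable
  also have "\<dots> \<le> (\<integral>\<^sup>+ a. \<integral>\<^sup>+ b. ennreal C * ennreal (u a) * ennreal (v b) * (\<integral>\<^sup>+ x. h x \<partial>lborel) \<partial>lborel \<partial>lborel)"
    using bound by (intro nn_integral_mono_AE) (auto elim!: eventually_mono intro!: nn_integral_mono_AE F_bound)
  also have "\<dots> = ennreal C * (\<integral>\<^sup>+ y. u y \<partial>lborel) * (\<integral>\<^sup>+ y. v y \<partial>lborel) * (\<integral>\<^sup>+ x. h x \<partial>lborel)"
    by (simp add: nn_integral_multc nn_integral_cmult)
  also have "\<dots> < \<infinity>" using finite by (simp add: ennreal_mult_less_top)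
  finally show ?thesis by (intro integrableI_bounded) measurable
qed

definition spectral_kernel :: "real \<Rightarrow> (real \<Rightarrow> real) \<Rightarrow> (real \<times> real) \<times> real \<Rightarrow> real" where
  "spectral_kernel alpha Phi = (\<lambda>(l, x). indicator ({-pi..pi} \<times> {-pi..pi}) l *
     (indicator {0..1/4} x * Phi x) * ((1/4 - x) powr alpha / (1 - 2 * x * (cos (fst l) + cos (snd l)))\<^sup>2))"

lemma spec_density_as_integral:
  "indicator ({-pi..pi} \<times> {-pi..pi}) l * spec_density sigma2 alpha Phi l
     = sigma2 / (4 * pi\<^sup>2) * (\<integral>x. spectral_kernel alpha Phi (l, x) \<partial>lborel)"
proof -
  let ?g = "\<lambda>x. Phi x * (1/4 - x) powr alpha / (1 - 2 * x * (cos (fst l) + cos (snd l)))\<^sup>2"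
  have "(\<lambda>x. spectral_kernel alpha Phi (l, x))
      = (\<lambda>x. indicator ({-pi..pi} \<times> {-pi..pi}) l * (indicator {0..1/4} x *\<^sub>R ?g x))"
    by (simp add: spectral_kernel_def mult_ac)
  then have "(\<integral>x. spectral_kernel alpha Phi (l, x) \<partial>lborel)
      = indicator ({-pi..pi} \<times> {-pi..pi}) l * (\<integral>x. indicator {0..1/4} x *\<^sub>R ?g x \<partial>lborel)"
    by (simp only: integral_mult_right_zero)
  then show ?thesis unfolding spec_density_def set_lebesgue_integral_def by simp
qed

lemma spectral_kernel_measurable:
  assumes "set_borel_measurable lborel {0..1/4} Phi"
  shows "spectral_kernel alpha Phi \<in> borel_measurable (lborel \<Otimes>\<^sub>M lborel)"
proof -
  define PhiI where "PhiI = (\<lambda>x. indicator {0..1/4} x * Phi x)"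
  have [measurable]: "PhiI \<in> borel_measurable lborel"
    using assms unfolding set_borel_measurable_def PhiI_def by simp
  have [measurable]: "{-pi..pi} \<times> {-pi..pi} \<in> sets (borel :: (real \<times> real) measure)"
    by (simp add: borel_closed closed_Times)
  have "(\<lambda>l::real \<times> real. cos (fst l) + cos (snd l)) \<in> borel_measurable lborel"
    unfolding measurable_lborel2 by (intro borel_measurable_continuous_onI continuous_intros)
  then have [measurable]: "(\<lambda>z::(real \<times> real) \<times> real. cos (fst (fst z)) + cos (snd (fst z)))
      \<in> borel_measurable (lborel \<Otimes>\<^sub>M lborel)"
    by (rule measurable_compose[OF measurable_fst])
  have "(\<lambda>z. indicator ({-pi..pi} \<times> {-pi..pi}) (fst z) * PhiI (snd z) *
      ((1/4 - snd z) powr alpha / (1 - 2 * snd z * (cos (fst (fst z)) + cos (snd (fst z))))\<^sup>2))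
      \<in> borel_measurable (lborel \<Otimes>\<^sub>M lborel)"
    by measurable
  then show ?thesis unfolding spectral_kernel_def PhiI_def case_prod_beta' .
qed

definition angle_weight :: "real \<Rightarrow> real \<Rightarrow> real" where
  "angle_weight p l = indicator {-pi..pi} l * \<bar>l\<bar> powr (-p)"

definition endpoint_weight :: "real \<Rightarrow> real \<Rightarrow> real" where
  "endpoint_weight q x = indicator {0..1/4} x * (1/4 - x) powr q"

(* The kernel is dominated by the product weight away from the axes a = 0, b = 0;
   at x = 1/4 both sides vanish since 0 powr alpha = 0. *)
lemma spectral_kernel_bound:
  fixes a b x p M :: real
  assumes Phi: "\<forall>y\<in>{0..1/4}. 0 \<le> Phi y \<and> Phi y \<le> M" and p: "0 \<le> p" "p \<le> 2"
    and ab: "a \<noteq> 0" "b \<noteq> 0"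
  shows "\<bar>spectral_kernel alpha Phi ((a, b), x)\<bar>
           \<le> 180\<^sup>2 * M * angle_weight p a * angle_weight p b * endpoint_weight (alpha - 2 + p) x"
proof (cases "\<bar>a\<bar> \<le> pi \<and> \<bar>b\<bar> \<le> pi \<and> 0 \<le> x \<and> x < 1/4")
  case True
  then have x: "0 \<le> x" "x < 1/4" and ab': "\<bar>a\<bar> \<le> pi" "\<bar>b\<bar> \<le> pi" by auto
  have phi: "0 \<le> Phi x" "Phi x \<le> M" using Phi x by auto
  have "spectral_kernel alpha Phi ((a, b), x)
      = Phi x * (1/4 - x) powr alpha / (1 - 2 * x * (cos a + cos b))\<^sup>2"
    using True by (simp add: spectral_kernel_def abs_le_iff)
  moreover have "\<dots> \<ge> 0" using phi by simp
  moreover have "angle_weight p a = \<bar>a\<bar> powr (-p)" "angle_weight p b = \<bar>b\<bar> powr (-p)"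
    "endpoint_weight (alpha - 2 + p) x = (1/4 - x) powr (alpha - 2 + p)"
    using True by (auto simp: angle_weight_def endpoint_weight_def abs_le_iff)
  ultimately show ?thesis
    using integrand_bound[OF x ab' ab p phi, of alpha] by (simp add: mult_ac)
next
  case False
  have "0 \<le> M" using Phi[rule_format, of 0] by simp
  moreover have "spectral_kernel alpha Phi ((a, b), x) = 0"
    using False by (cases "x = 1/4") (auto simp: spectral_kernel_def abs_le_iff)
  ultimately show ?thesis by (simp add: angle_weight_def endpoint_weight_def)
qed

(* Main theorem: choose p = 1 - min(alpha,1)/2, so that p < 1 and alpha - 2 + p > -1. *)
theorem mainTheorem2:
  fixes alpha sigma2 :: real and Phi :: "real \<Rightarrow> real"
  assumes "alpha > 0"
    and "sigma2 > 0"
    and "set_borel_measurable lborel {0..1/4} Phi"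
    and "bounded (Phi ` {0..1/4})"
    and "\<forall>x\<in>{0..1/4}. Phi x \<ge> 0"
    and "continuous (at (1/4) within {0..1/4}) Phi"
    and "Phi (1/4) \<noteq> 0"
    and "alpha = 1 \<Longrightarrow> \<exists>beta>0. holder_on {0..1/4} beta Phi"
  shows "set_integrable lborel ({-pi..pi} \<times> {-pi..pi}) (spec_density sigma2 alpha Phi)"
proof -
  obtain M where M: "\<forall>y\<in>{0..1/4}. 0 \<le> Phi y \<and> Phi y \<le> M"
    using assms(4,5) unfolding bounded_iff by force
  define p where "p = 1 - min alpha 1 / 2"
  have p: "0 \<le> p" "p \<le> 2" "p < 1" and q: "alpha - 2 + p > -1"
    using assms(1) by (auto simp: p_def min_def)
  have angle_finite: "(\<integral>\<^sup>+ y. angle_weight p y \<partial>lborel) < \<infinity>"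
    unfolding angle_weight_def using p by (intro nn_integral_abs_powr_finite) auto
  have endpoint_finite: "(\<integral>\<^sup>+ x. endpoint_weight (alpha - 2 + p) x \<partial>lborel) < \<infinity>"
    unfolding endpoint_weight_def using q by (intro nn_integral_powr_to_endpoint_finite) auto
  have "integrable (lborel \<Otimes>\<^sub>M lborel) (spectral_kernel alpha Phi)"
  proof (rule integrable_dominated_by_product)
    show "AE a in lborel. AE b in lborel. \<forall>x. \<bar>spectral_kernel alpha Phi ((a, b), x)\<bar>
        \<le> 180\<^sup>2 * M * angle_weight p a * angle_weight p b * endpoint_weight (alpha - 2 + p) x"
    proof -
      have nonzero: "AE y in lborel. y \<noteq> (0::real)" by (rule AE_lborel_singleton)
      then show ?thesis
      proof eventually_elim
        case (elim a)
        from nonzero show ?case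
          by eventually_elim (intro allI spectral_kernel_bound[OF M p(1,2) elim])
      qed
    qed
  qed (use assms(3) M[rule_format, of 0] angle_finite endpoint_finite in
      \<open>auto simp: angle_weight_def endpoint_weight_def intro: spectral_kernel_measurable\<close>)
  then have "integrable lborel (\<lambda>l. sigma2 / (4 * pi\<^sup>2) * (\<integral>x. spectral_kernel alpha Phi (l, x) \<partial>lborel))"
    by (intro integrable_mult_right lborel_pair.integrable_fst')
  then show ?thesis
    unfolding set_integrable_def real_scaleR_def spec_density_as_integral .
qed

end
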